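(* Let $\sigma=\{\sigma_z\}_{z\in\mathbb{Z}}$ be i.i.d. strictly positive random variables with law $\mathbf{P}$, with $L(x):=1/\mathbf{P}(\sigma_0>x)$ slowly varying at infinity (i.e. $\lim_{u\to\infty}L(uv)/L(u)=1$ for every $v>0$). Let $h_t$ be any function with $h_t\to\infty$, $h_t^2=o(r_t)$, and such that, for all sufficiently large $t$, \[ L(\ell_t/h_t^3)>L(\ell_t)(1-1/h_t)\quad\text{and}\quad L(\ell_th_t^3)<L(\ell_t)(1+1/h_t).\] Then $\mathbf{P}(\mathcal{C}^h_t)\to1$ as $t\to\infty$, where $\mathcal{C}^h_t:=\{\bar S_t<\ell_t/h_t\}$.
   Context: $\ell_t:=\min\{s\ge0: sL(s)\ge t\}$, $r_t:=L(\ell_t)$, $Z^{(1)}_t:=\min\{z\in\mathbb{Z}^+:\sigma_z>\ell_t\}$, $Z^{(2)}_t:=\max\{z\in\mathbb{Z}^-:\sigma_z>\ell_t\}$ (with $\mathbb{Z}^+$ the positive and $\mathbb{Z}^-$ the non-positive integers), and $\bar S_t:=\sum_{i=1,2}\ \sum_{z\in\mathbb{Z}:\,1\le|z-Z^{(i)}_t|<r_t/h_t}\sigma_z$. *)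

theory Defs
  imports "HOL-Probability.Probability" "HOL-Library.Landau_Symbols"
begin

definition tailL :: "'a measure \<Rightarrow> (int \<Rightarrow> 'a \<Rightarrow> real) \<Rightarrow> real \<Rightarrow> real" where
  "tailL M \<sigma> x = 1 / measure M {\<omega> \<in> space M. \<sigma> 0 \<omega> > x}"

definition ellt :: "'a measure \<Rightarrow> (int \<Rightarrow> 'a \<Rightarrow> real) \<Rightarrow> real \<Rightarrow> real" where
  "ellt M \<sigma> t = Inf {s. 0 \<le> s \<and> s * tailL M \<sigma> s \<ge> t}"

definition rt :: "'a measure \<Rightarrow> (int \<Rightarrow> 'a \<Rightarrow> real) \<Rightarrow> real \<Rightarrow> real" where
  "rt M \<sigma> t = tailL M \<sigma> (ellt M \<sigma> t)"

definition Z1 :: "'a measure \<Rightarrow> (int \<Rightarrow> 'a \<Rightarrow> real) \<Rightarrow> real \<Rightarrow> 'a \<Rightarrow> int" where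
  "Z1 M \<sigma> t \<omega> = Inf {z::int. 0 < z \<and> \<sigma> z \<omega> > ellt M \<sigma> t}"

definition Z2 :: "'a measure \<Rightarrow> (int \<Rightarrow> 'a \<Rightarrow> real) \<Rightarrow> real \<Rightarrow> 'a \<Rightarrow> int" where
  "Z2 M \<sigma> t \<omega> = Sup {z::int. z \<le> 0 \<and> \<sigma> z \<omega> > ellt M \<sigma> t}"

definition Sbar :: "'a measure \<Rightarrow> (int \<Rightarrow> 'a \<Rightarrow> real) \<Rightarrow> (real \<Rightarrow> real) \<Rightarrow> real \<Rightarrow> 'a \<Rightarrow> real" where
  "Sbar M \<sigma> h t \<omega> =
     (\<Sum>z\<in>{z::int. 1 \<le> \<bar>z - Z1 M \<sigma> t \<omega>\<bar> \<and> real_of_int \<bar>z - Z1 M \<sigma> t \<omega>\<bar> < rt M \<sigma> t / h t}. \<sigma> z \<omega>)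
   + (\<Sum>z\<in>{z::int. 1 \<le> \<bar>z - Z2 M \<sigma> t \<omega>\<bar> \<and> real_of_int \<bar>z - Z2 M \<sigma> t \<omega>\<bar> < rt M \<sigma> t / h t}. \<sigma> z \<omega>)"

end

theory Submission
  imports Defs
begin

text \<open>
  Write \<open>e = ell_t\<close>, \<open>r = L(e)\<close> and \<open>h = h_t\<close>. The index \<open>Z1\<close> is the first exceedance of
  level \<open>e\<close> along \<open>1, 2, 3, \<dots>\<close>; on the event \<open>Z1 = k\<close> every other coordinate has a law
  dominated by \<open>P(\<sigma>\<^sub>0 \<in> \<cdot>) / P(\<sigma>\<^sub>0 \<le> e)\<close>, and \<open>P(\<sigma>\<^sub>0 \<le> e) = 1 - 1/r \<ge> 1/2\<close>. The window
  around \<open>Z1\<close> has at most \<open>2r/h\<close> sites. A value above \<open>a = e/h\<^sup>3\<close> occurs in it with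
  probability \<open>O(1/h)\<close>, because \<open>L(a) \<ge> r/2\<close>. Values below \<open>a\<close> are split into dyadic layers:
  slow variation gives \<open>L(y/2) \<ge> 3/4 L(y)\<close> for large \<open>y\<close>, so the truncated window sum has
  conditional expectation \<open>O(r/h \<cdot> a/L(a)) = O(e/h\<^sup>3)\<close>, apart from values below a fixed \<open>y\<^sub>0\<close>,
  which contribute at most \<open>2r/h \<cdot> y\<^sub>0 = o(e/h)\<close> because \<open>L(x)\<^sup>2 = O(x)\<close>. Markov's inequality
  then bounds the probability that the window sum exceeds \<open>e/(2h)\<close> by \<open>O(1/h)\<close>. The same
  argument applies to \<open>Z2\<close>, the first exceedance along \<open>0, -1, -2, \<dots>\<close>, and \<open>h_t \<rightarrow> \<infinity>\<close>.
\<close>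

section \<open>Infima and suprema of integer sets\<close>

lemma int_set_has_least:
  fixes S :: "int set"
  assumes "S \<subseteq> {b..}" "z \<in> S"
  obtains m where "m \<in> S" "\<And>j. j \<in> S \<Longrightarrow> m \<le> j"
proof
  have "z \<in> S \<inter> {b..z}" using assms by auto
  then have fin: "finite (S \<inter> {b..z})" "S \<inter> {b..z} \<noteq> {}" by auto
  show "Min (S \<inter> {b..z}) \<in> S" using Min_in[OF fin] by blast
  show "Min (S \<inter> {b..z}) \<le> j" if "j \<in> S" for j
    using that assms fin by (cases "j \<le> z") (auto intro: Min_le order.trans[OF Min_le])
qed

lemma Inf_int_eq_iff:
  fixes S :: "int set"
  assumes "S \<subseteq> {b..}" "S \<noteq> {}"
  shows "Inf S = k \<longleftrightarrow> k \<in> S \<and> (\<forall>j\<in>{b..<k}. j \<notin> S)"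
proof -
  obtain m where m: "m \<in> S" "\<And>j. j \<in> S \<Longrightarrow> m \<le> j"
    using assms int_set_has_least by blast
  have "Inf S = m" using m by (rule cInf_eq_minimum)
  then show ?thesis using m assms by fastforce
qed

lemma Sup_int_eq_uminus_Inf: "Sup (S :: int set) = - Inf (uminus ` S)"
  by (simp add: Inf_int_def image_image)

lemma measurable_Inf_int:
  fixes S :: "'b \<Rightarrow> int set"
  assumes [measurable]: "\<And>z. Measurable.pred N (\<lambda>x. z \<in> S x)" and "\<And>x. S x \<subseteq> {b..}"
  shows "(\<lambda>x. Inf (S x)) \<in> measurable N (count_space UNIV)"
proof (subst measurable_count_space_eq2_countable, intro conjI ballI)
  fix k :: int
  have "(\<lambda>x. Inf (S x)) -` {k} \<inter> space N =
    {x\<in>space N. (\<exists>z. z \<in> S x) \<and> k \<in> S x \<and> (\<forall>j\<in>{b..<k}. j \<notin> S x) \<or> (\<forall>z. z \<notin> S x) \<and> Inf {} = k}"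
  proof -
    have "Inf (S x) = k \<longleftrightarrow> (\<exists>z. z \<in> S x) \<and> k \<in> S x \<and> (\<forall>j\<in>{b..<k}. j \<notin> S x) \<or> (\<forall>z. z \<notin> S x) \<and> Inf {} = k" for x
      using Inf_int_eq_iff[OF assms(2), of x k] by (cases "S x = {}") auto
    then show ?thesis by auto
  qed
  also have "\<dots> \<in> sets N" by measurable
  finally show "(\<lambda>x. Inf (S x)) -` {k} \<inter> space N \<in> sets N" .
qed auto

lemma measurable_Sup_int:
  fixes S :: "'b \<Rightarrow> int set"
  assumes "\<And>z. Measurable.pred N (\<lambda>x. z \<in> S x)" and "\<And>x. S x \<subseteq> {..b}"
  shows "(\<lambda>x. Sup (S x)) \<in> measurable N (count_space UNIV)"
proof -
  have "(\<lambda>x. Inf (uminus ` S x)) \<in> measurable N (count_space UNIV)"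
  proof (rule measurable_Inf_int)
    show "Measurable.pred N (\<lambda>x. z \<in> uminus ` S x)" for z
    proof -
      have "z \<in> uminus ` S x \<longleftrightarrow> - z \<in> S x" for x by force
      then show ?thesis using assms(1)[of "- z"] by simp
    qed
    show "uminus ` S x \<subseteq> {-b..}" for x using assms(2)[of x] by auto
  qed
  then show ?thesis unfolding Sup_int_eq_uminus_Inf by simp
qed

lemma Inf_pos_int_eq_first:
  assumes "P (int k + 1)" "\<And>i. i < k \<Longrightarrow> \<not> P (int i + 1)"
  shows "Inf {z::int. 0 < z \<and> P z} = int k + 1"
proof (rule cInf_eq_minimum)
  show "int k + 1 \<le> z" if "z \<in> {z. 0 < z \<and> P z}" for z
  proof (rule ccontr)
    assume "\<not> int k + 1 \<le> z"
    then have "nat (z - 1) < k" "int (nat (z - 1)) + 1 = z" using that by auto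
    then show False using that assms(2)[of "nat (z - 1)"] by auto
  qed
qed (use assms in auto)

lemma Sup_nonpos_int_eq_first:
  assumes "P (- int k)" "\<And>i. i < k \<Longrightarrow> \<not> P (- int i)"
  shows "Sup {z::int. z \<le> 0 \<and> P z} = - int k"
proof (rule cSup_eq_maximum)
  show "z \<le> - int k" if "z \<in> {z. z \<le> 0 \<and> P z}" for z
  proof (rule ccontr)
    assume "\<not> z \<le> - int k"
    then have "nat (- z) < k" "- int (nat (- z)) = z" using that by auto
    then show False using that assms(2)[of "nat (- z)"] by auto
  qed
qed (use assms in auto)

section \<open>Windows and dyadic layers\<close>

definition window :: "real \<Rightarrow> int \<Rightarrow> int set" where
  "window n k = {z. 1 \<le> \<bar>z - k\<bar> \<and> real_of_int \<bar>z - k\<bar> < n}"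

lemma window_subset: "window n k \<subseteq> {k - (\<lceil>n\<rceil> - 1)..k - 1} \<union> {k + 1..k + (\<lceil>n\<rceil> - 1)}"
  unfolding window_def by (auto simp: abs_if) linarith+

lemma finite_window [simp]: "finite (window n k)"
  using window_subset finite_subset by blast

lemma center_notin_window [simp]: "k \<notin> window n k"
  by (simp add: window_def)

lemma card_window_le:
  assumes "0 \<le> n"
  shows "real (card (window n k)) \<le> 2 * n"
proof -
  have "card (window n k) \<le> card ({k - (\<lceil>n\<rceil> - 1)..k - 1} \<union> {k + 1..k + (\<lceil>n\<rceil> - 1)})"
    by (intro card_mono window_subset) auto
  also have "\<dots> \<le> nat (\<lceil>n\<rceil> - 1) + nat (\<lceil>n\<rceil> - 1)"
    by (rule order.trans[OF card_Un_le]) simp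
  finally have "real (card (window n k)) \<le> 2 * real (nat (\<lceil>n\<rceil> - 1))" by linarith
  also have "real (nat (\<lceil>n\<rceil> - 1)) \<le> n" using assms by linarith
  finally show ?thesis by simp
qed

lemma le_dyadic_layers:
  fixes a y0 x :: real
  assumes "0 \<le> a" and y0: "0 < y0" and N: "a / 2^N < y0" and x: "x \<le> a"
  shows "x \<le> y0 + (\<Sum>j<N. a / 2^j * of_bool (a / 2^Suc j < x))"
proof (cases "x \<le> y0")
  case True
  have "0 \<le> (\<Sum>j<N. a / 2^j * of_bool (a / 2^Suc j < x))"
    using \<open>0 \<le> a\<close> by (intro sum_nonneg) auto
  with True show ?thesis by linarith
next
  case False
  define j where "j = (LEAST j. a / 2^Suc j < x)"
  have ex: "a / 2^Suc (N - 1) < x" using N False x by (cases N) auto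
  have j: "a / 2^Suc j < x" unfolding j_def by (rule LeastI[of "\<lambda>j. a / 2^Suc j < x", OF ex])
  have "j \<le> N - 1" unfolding j_def by (rule Least_le[of "\<lambda>j. a / 2^Suc j < x", OF ex])
  moreover have "N \<noteq> 0" using N False x by (cases N) auto
  ultimately have jN: "j < N" by linarith
  have x_le: "x \<le> a / 2^j"
  proof (cases j)
    case (Suc i)
    then have "\<not> a / 2^Suc i < x" using not_less_Least[of i "\<lambda>j. a / 2^Suc j < x"] unfolding j_def by simp
    then show ?thesis using Suc by simp
  qed (use x in simp)
  have "x \<le> a / 2^j * of_bool (a / 2^Suc j < x)" using j x_le by simp
  also have "\<dots> \<le> (\<Sum>j<N. a / 2^j * of_bool (a / 2^Suc j < x))"
    using jN \<open>0 \<le> a\<close> by (intro member_le_sum) auto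
  finally show ?thesis using y0 by linarith
qed

lemma exists_least_dyadic_below:
  fixes a y0 :: real
  assumes "0 < y0"
  obtains N where "a / 2^N < y0" "\<And>j. j < N \<Longrightarrow> y0 \<le> a / 2^j"
proof
  obtain M where "a / y0 < 2^M" using real_arch_pow[of 2 "a / y0"] by auto
  then have ex: "a / 2^M < y0" using assms by (simp add: divide_less_eq mult.commute)
  show "a / 2^(LEAST N. a / 2^N < y0) < y0" by (rule LeastI[of "\<lambda>N. a / 2^N < y0", OF ex])
  show "y0 \<le> a / 2^j" if "j < (LEAST N. a / 2^N < y0)" for j
    using not_less_Least[OF that] by simp
qed

lemma sum_le_dyadic_layers:
  fixes x :: "'b \<Rightarrow> real"
  assumes "real (card W) \<le> m" "0 \<le> a" "0 < y0" "a / 2^N < y0" "\<And>z. z \<in> W \<Longrightarrow> x z \<le> a"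
  shows "(\<Sum>z\<in>W. x z) \<le> m * y0 + (\<Sum>z\<in>W. \<Sum>j<N. a / 2^j * of_bool (a / 2^Suc j < x z))"
proof -
  have "(\<Sum>z\<in>W. x z) \<le> (\<Sum>z\<in>W. y0 + (\<Sum>j<N. a / 2^j * of_bool (a / 2^Suc j < x z)))"
    using assms(2-5) by (intro sum_mono le_dyadic_layers) auto
  also have "\<dots> = real (card W) * y0 + (\<Sum>z\<in>W. \<Sum>j<N. a / 2^j * of_bool (a / 2^Suc j < x z))"
    by (simp add: sum.distrib)
  also have "real (card W) * y0 \<le> m * y0"
    using assms(1,3) by simp
  finally show ?thesis by simp
qed

lemma window_bound_arith:
  fixes hh r e Q pa S c :: real
  assumes "2 \<le> hh" "0 < r" "0 < e" "1/2 \<le> Q" "0 \<le> pa" "pa \<le> 2 / r" "0 \<le> S" "S \<le> 8 * (e / hh^3) / r"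
    and "e / (4 * hh) \<le> c"
  shows "2 * (r / hh) / Q * (pa + S / c) \<le> 136 / hh"
proof -
  have "0 < e / (4 * hh)" using assms(1,3) by simp
  have "S / c \<le> 8 * (e / hh^3) / r / (e / (4 * hh))"
    using assms \<open>0 < e / (4 * hh)\<close> by (intro frac_le) auto
  also have "\<dots> = 32 / (hh^2 * r)"
    using assms(1-3) by (simp add: field_simps power2_eq_square power3_eq_cube)
  finally have "pa + S / c \<le> 2 / r + 32 / (hh^2 * r)" using assms(6) by linarith
  moreover have "2 * (r / hh) / Q \<le> 4 * (r / hh)"
    using assms(1,2,4) by (simp add: field_simps)
  moreover have "0 \<le> pa + S / c"
    using assms(5,7,9) \<open>0 < e / (4 * hh)\<close> by simp
  ultimately have "2 * (r / hh) / Q * (pa + S / c) \<le> 4 * (r / hh) * (2 / r + 32 / (hh^2 * r))"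
    using assms(1,2) by (intro mult_mono) auto
  also have "\<dots> = 8 / hh + 128 / hh^3"
    using assms(1,2) by (simp add: field_simps power2_eq_square power3_eq_cube)
  also have "128 / hh^3 \<le> 128 / hh"
  proof -
    have "1 \<le> hh^2" using assms(1) by (intro one_le_power) simp
    then have "hh * 1 \<le> hh * hh^2" using assms(1) by (intro mult_left_mono) auto
    then show ?thesis using assms(1) by (intro divide_left_mono) (auto simp: power3_eq_cube power2_eq_square)
  qed
  finally show ?thesis by simp
qed

section \<open>Consequences of slow variation\<close>

lemma slowly_varying_halving_bound:
  fixes L :: "real \<Rightarrow> real"
  assumes lim: "((\<lambda>u. L (u * (1/2)) / L u) \<longlongrightarrow> 1) at_top" and nonneg: "\<And>x. 0 \<le> L x"
  obtains y0 where "0 < y0" "\<And>y. y0 \<le> y \<Longrightarrow> 0 < L y \<and> 3/4 * L y \<le> L (y/2)"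
proof -
  have "eventually (\<lambda>u. 3/4 < L (u * (1/2)) / L u) at_top"
    by (rule order_tendstoD(1)[OF lim]) simp
  then obtain y1 where y1: "\<And>u. y1 \<le> u \<Longrightarrow> 3/4 < L (u * (1/2)) / L u"
    unfolding eventually_at_top_linorder by blast
  show thesis
  proof
    show "0 < max y1 1" by simp
    fix y assume "max y1 1 \<le> y"
    then have ratio: "3/4 < L (y/2) / L y" using y1[of y] by simp
    then have "0 < L y" using nonneg[of y] by (cases "L y = 0") auto
    with ratio show "0 < L y \<and> 3/4 * L y \<le> L (y/2)" by (simp add: pos_less_divide_eq)
  qed
qed

lemma halving_bound_iterate:
  fixes L :: "real \<Rightarrow> real"
  assumes halving: "\<And>y. y0 \<le> y \<Longrightarrow> 0 < L y \<and> 3/4 * L y \<le> L (y/2)" and "0 \<le> a"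
  shows "y0 \<le> a / 2^j \<Longrightarrow> (3/4)^Suc j * L a \<le> L (a / 2^Suc j)"
proof (induction j)
  case 0
  then show ?case using halving by auto
next
  case (Suc j)
  have "a / 2^Suc j \<le> a / 2^j" using \<open>0 \<le> a\<close> by (simp add: divide_left_mono)
  then have "y0 \<le> a / 2^j" using Suc.prems by linarith
  have "(3/4)^Suc (Suc j) * L a = 3/4 * ((3/4)^Suc j * L a)" by simp
  also have "\<dots> \<le> 3/4 * L (a / 2^Suc j)"
    by (rule mult_left_mono) (use Suc.IH[OF \<open>y0 \<le> a / 2^j\<close>] in auto)
  also have "\<dots> \<le> L (a / 2^Suc j / 2)" using halving Suc.prems by blast
  finally show ?case by simp
qed

lemma dyadic_layers_tail_sum_le:
  fixes L :: "real \<Rightarrow> real"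
  assumes halving: "\<And>y. y0 \<le> y \<Longrightarrow> 0 < L y \<and> 3/4 * L y \<le> L (y/2)"
    and "0 < a" "0 \<le> L a" and above: "\<And>j. j < N \<Longrightarrow> y0 \<le> a / 2^j"
  shows "(\<Sum>j<N. a / 2^j / L (a / 2^Suc j)) \<le> 4 * a / L a"
proof (cases N)
  case 0
  then show ?thesis using assms(2,3) by simp
next
  case (Suc N')
  have La: "0 < L a" using halving above[of 0] Suc by simp
  have expand: "4/3 * (a / L a) * (3 * (1 - q)) = 4 * a / L a - 4 * a / L a * q" for q :: real
    using La by (simp add: field_simps)
  have "(\<Sum>j<N. a / 2^j / L (a / 2^Suc j)) \<le> (\<Sum>j<N. 4/3 * (a / L a) * (2/3)^j)"
  proof (intro sum_mono)
    fix j assume "j \<in> {..<N}"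
    then have le: "(3/4)^Suc j * L a \<le> L (a / 2^Suc j)"
      using halving_bound_iterate[of y0 L, OF halving] above \<open>0 < a\<close> by simp
    have pos: "0 < (3/4::real)^Suc j * L a" using La by simp
    then have "0 < L (a / 2^Suc j)" using le by linarith
    have "a / 2^j / L (a / 2^Suc j) \<le> a / 2^j / ((3/4)^Suc j * L a)"
      using le pos \<open>0 < a\<close> \<open>0 < L (a / 2^Suc j)\<close> by (intro divide_left_mono) auto
    also have "\<dots> = 4/3 * (a / L a) * (2/3)^j"
      using La by (simp add: field_simps power_divide flip: power_mult_distrib)
    finally show "a / 2^j / L (a / 2^Suc j) \<le> 4/3 * (a / L a) * (2/3)^j" .
  qed
  also have "\<dots> = 4/3 * (a / L a) * (\<Sum>j<N. (2/3)^j)"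
    by (simp add: sum_distrib_left)
  also have "(\<Sum>j<N. (2/3::real)^j) = 3 * (1 - (2/3)^N)"
    by (subst geometric_sum) auto
  also have "4/3 * (a / L a) * (3 * (1 - (2/3)^N)) = 4 * a / L a - 4 * a / L a * (2/3)^N"
    using expand .
  also have "\<dots> \<le> 4 * a / L a"
    using La \<open>0 < a\<close> by simp
  finally show ?thesis .
qed

lemma square_le_linear_of_halving:
  fixes L :: "real \<Rightarrow> real"
  assumes halving: "\<And>y. y0 \<le> y \<Longrightarrow> 0 < L y \<and> 3/4 * L y \<le> L (y/2)" and "0 < y0"
    and nonneg: "\<And>x. 0 \<le> L x" and mono: "\<And>x y. x \<le> y \<Longrightarrow> 0 < L y \<Longrightarrow> L x \<le> L y"
    and "y0 < x"
  shows "(L x)^2 \<le> (L (2 * y0))^2 / y0 * x"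
proof -
  define C where "C = (L (2 * y0))^2 / y0"
  have "0 \<le> C" unfolding C_def using \<open>0 < y0\<close> by simp
  have "\<forall>x. y0 < x \<and> x \<le> y0 * 2^m \<longrightarrow> (L x)^2 \<le> C * x" for m :: nat
  proof (induction m)
    case (Suc m)
    show ?case
    proof (intro allI impI)
      fix x assume x: "y0 < x \<and> x \<le> y0 * 2^Suc m"
      show "(L x)^2 \<le> C * x"
      proof (cases "x \<le> 2 * y0")
        case True
        have "(L x)^2 \<le> (L (2 * y0))^2"
          using mono[OF True] halving[of "2 * y0"] nonneg[of x] \<open>0 < y0\<close> by (intro power_mono) auto
        also have "\<dots> = C * y0" unfolding C_def using \<open>0 < y0\<close> by simp
        also have "\<dots> \<le> C * x" using x \<open>0 \<le> C\<close> by (intro mult_left_mono) auto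
        finally show ?thesis .
      next
        case False
        then have "y0 < x/2 \<and> x/2 \<le> y0 * 2^m" using x by auto
        then have "(L (x/2))^2 \<le> C * (x/2)" using Suc.IH by blast
        moreover have "(3/4 * L x)^2 \<le> (L (x/2))^2" using halving[of x] x by (intro power_mono) auto
        moreover have "(3/4 * L x)^2 = 9/16 * (L x)^2" by (simp add: power2_eq_square)
        ultimately have "9/16 * (L x)^2 \<le> C * (x/2)" by linarith
        moreover have "0 \<le> C * x" using \<open>0 \<le> C\<close> x \<open>0 < y0\<close> by simp
        ultimately show ?thesis by linarith
      qed
    qed
  qed simp
  moreover obtain m where "x / y0 < 2^m" using real_arch_pow[of 2 "x / y0"] by auto
  then have "x \<le> y0 * 2^m" using \<open>0 < y0\<close> by (simp add: divide_less_eq mult.commute)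
  ultimately show ?thesis using \<open>y0 < x\<close> unfolding C_def by blast
qed

lemma scale_bounds_of_square_le_linear:
  fixes L :: "real \<Rightarrow> real"
  assumes mono: "\<And>x y. x \<le> y \<Longrightarrow> 0 < L y \<Longrightarrow> L x \<le> L y" and "0 < y0" "0 < L y0"
    and square: "\<And>x. y0 < x \<Longrightarrow> (L x)^2 \<le> C * x" and "0 < C"
    and hh: "2 \<le> hh" "L y0 < hh" "8 * y0 * C \<le> hh" "hh^2 \<le> L e"
  shows "hh \<le> L e" "y0 < e" "2 * (L e / hh) * y0 \<le> e / (4 * hh)"
proof -
  have "hh * 1 \<le> hh * hh" using hh(1) by (intro mult_left_mono) auto
  then show "hh \<le> L e" using hh(4) by (simp add: power2_eq_square)
  show "y0 < e"
  proof (rule ccontr)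
    assume "\<not> y0 < e"
    then have "L e \<le> L y0" using mono \<open>0 < L y0\<close> by simp
    then show False using \<open>hh \<le> L e\<close> hh(2) by simp
  qed
  have "8 * y0 * C * L e \<le> L e * L e"
    using \<open>hh \<le> L e\<close> hh(1,3) by (intro mult_right_mono) auto
  then have "8 * L e * y0 \<le> L e * L e / C"
    using \<open>0 < C\<close> by (simp add: le_divide_eq mult_ac)
  also have "\<dots> \<le> e"
    using square[OF \<open>y0 < e\<close>] \<open>0 < C\<close> by (simp add: field_simps power2_eq_square)
  finally show "2 * (L e / hh) * y0 \<le> e / (4 * hh)"
    using hh(1) by (simp add: field_simps)
qed

section \<open>Families of independent identically distributed variables\<close>

lemma le_of_le_power_add:
  fixes X D q :: real
  assumes "\<And>K. X \<le> q^K + D" "0 \<le> q" "q < 1"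
  shows "X \<le> D"
proof -
  have "(\<lambda>K. q^K + D) \<longlonglongrightarrow> 0 + D"
    using assms(2,3) by (intro tendsto_add LIMSEQ_power_zero tendsto_const) auto
  then show ?thesis
    by (intro LIMSEQ_le_const[of "\<lambda>K. q^K + D"]) (use assms(1) in auto)
qed

locale iid_family = prob_space M for M :: "'a measure" +
  fixes \<sigma> :: "int \<Rightarrow> 'a \<Rightarrow> real"
  assumes measurable_\<sigma> [measurable]: "\<And>z. \<sigma> z \<in> borel_measurable M"
    and indep_\<sigma>: "indep_vars (\<lambda>_. borel) \<sigma> UNIV"
    and ident_\<sigma>: "\<And>z. distr M borel (\<sigma> z) = distr M borel (\<sigma> 0)"
begin

definition law :: "real set \<Rightarrow> real" where
  "law B = prob {\<omega> \<in> space M. \<sigma> 0 \<omega> \<in> B}"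

lemma prob_\<sigma>_in_eq_law:
  assumes "B \<in> sets borel"
  shows "prob {\<omega> \<in> space M. \<sigma> z \<omega> \<in> B} = law B"
proof -
  have "prob {\<omega> \<in> space M. \<sigma> z \<omega> \<in> B} = measure (distr M borel (\<sigma> z)) B"
    using assms by (subst measure_distr) (auto simp: vimage_def Int_def conj_commute)
  also have "\<dots> = measure (distr M borel (\<sigma> 0)) B"
    by (subst ident_\<sigma>[of z]) (rule refl)
  also have "\<dots> = law B"
    using assms unfolding law_def by (subst measure_distr) (auto simp: vimage_def Int_def conj_commute)
  finally show ?thesis .
qed

lemma law_nonneg: "0 \<le> law B"
  by (simp add: law_def)

lemma law_UNIV: "law UNIV = 1"
  by (simp add: law_def prob_space)

lemma law_mono: "B \<subseteq> B' \<Longrightarrow> B' \<in> sets borel \<Longrightarrow> law B \<le> law B'"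
  unfolding law_def by (intro finite_measure_mono) auto

lemma prob_all_\<sigma>_in:
  assumes "finite J" "\<And>j. j \<in> J \<Longrightarrow> B j \<in> sets borel"
  shows "prob {\<omega> \<in> space M. \<forall>j\<in>J. \<sigma> j \<omega> \<in> B j} = (\<Prod>j\<in>J. law (B j))"
proof (cases "J = {}")
  case True
  then show ?thesis by (simp add: prob_space)
next
  case False
  have "indep_sets (\<lambda>j. {\<sigma> j -` A \<inter> space M | A. A \<in> sets borel}) UNIV"
    using indep_\<sigma> unfolding indep_vars_def2 by simp
  then have "prob (\<Inter>j\<in>J. \<sigma> j -` B j \<inter> space M) = (\<Prod>j\<in>J. prob (\<sigma> j -` B j \<inter> space M))"
    using assms False by (intro indep_setsD) auto
  moreover have "{\<omega> \<in> space M. \<forall>j\<in>J. \<sigma> j \<omega> \<in> B j} = (\<Inter>j\<in>J. \<sigma> j -` B j \<inter> space M)"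
    using False by auto
  moreover have "\<sigma> j -` B j \<inter> space M = {\<omega> \<in> space M. \<sigma> j \<omega> \<in> B j}" for j
    by auto
  ultimately show ?thesis using assms by (simp add: prob_\<sigma>_in_eq_law)
qed

lemma prob_exceedance_Int_le:
  assumes "finite C" "k \<notin> C" "z \<noteq> k" "B \<in> sets borel"
  shows "prob ({\<omega> \<in> space M. e < \<sigma> k \<omega> \<and> (\<forall>j\<in>C. \<sigma> j \<omega> \<le> e)} \<inter> {\<omega> \<in> space M. \<sigma> z \<omega> \<in> B}) * law {..e}
    \<le> prob {\<omega> \<in> space M. e < \<sigma> k \<omega> \<and> (\<forall>j\<in>C. \<sigma> j \<omega> \<le> e)} * law B"
proof -
  define D where "D = insert z (insert k C)"
  define A where "A j = (if j = k then {e<..} else if j \<in> C then {..e} else UNIV)" for j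
  define A' where "A' = A(z := A z \<inter> B)"
  have D: "finite D" "z \<in> D" using assms(1) by (auto simp: D_def)
  have A: "A j \<in> sets borel" "A' j \<in> sets borel" for j
    using assms(4) by (auto simp: A_def A'_def)
  have E: "{\<omega> \<in> space M. e < \<sigma> k \<omega> \<and> (\<forall>j\<in>C. \<sigma> j \<omega> \<le> e)} = {\<omega> \<in> space M. \<forall>j\<in>D. \<sigma> j \<omega> \<in> A j}"
    using assms(2) by (auto simp: D_def A_def)
  have EB: "{\<omega> \<in> space M. \<forall>j\<in>D. \<sigma> j \<omega> \<in> A j} \<inter> {\<omega> \<in> space M. \<sigma> z \<omega> \<in> B}
      = {\<omega> \<in> space M. \<forall>j\<in>D. \<sigma> j \<omega> \<in> A' j}"
    by (auto simp: D_def A'_def)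
  have PE: "prob {\<omega> \<in> space M. \<forall>j\<in>D. \<sigma> j \<omega> \<in> A j} = law (A z) * (\<Prod>j\<in>D - {z}. law (A j))"
    using A by (simp add: prob_all_\<sigma>_in[OF D(1)] prod.remove[OF D])
  have PEB: "prob {\<omega> \<in> space M. \<forall>j\<in>D. \<sigma> j \<omega> \<in> A' j} = law (A z \<inter> B) * (\<Prod>j\<in>D - {z}. law (A j))"
  proof -
    have "(\<Prod>j\<in>D - {z}. law (A' j)) = (\<Prod>j\<in>D - {z}. law (A j))"
      by (intro prod.cong) (auto simp: A'_def)
    then show ?thesis using A by (simp add: prob_all_\<sigma>_in[OF D(1)] prod.remove[OF D] A'_def)
  qed
  have key: "law (A z \<inter> B) * law {..e} \<le> law (A z) * law B"
  proof (cases "z \<in> C")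
    case True
    then have "law (A z \<inter> B) \<le> law B" using assms(3,4) by (intro law_mono) auto
    then have "law (A z \<inter> B) * law {..e} \<le> law B * law {..e}"
      by (rule mult_right_mono) (rule law_nonneg)
    then show ?thesis using True assms(3) by (simp add: A_def mult.commute)
  next
    case False
    have "law {..e} \<le> 1" using law_mono[of "{..e}" UNIV] by (simp add: law_UNIV)
    then have "law B * law {..e} \<le> law B"
      using law_nonneg[of B] by (rule mult_left_le)
    then show ?thesis using False assms(3) by (simp add: A_def law_UNIV)
  qed
  have "0 \<le> (\<Prod>j\<in>D - {z}. law (A j))" by (simp add: law_nonneg prod_nonneg)
  from mult_right_mono[OF key this] show ?thesis
    unfolding E EB PE PEB by (simp add: ac_simps)
qed

lemma sum_prob_Int_\<sigma>_in_le:
  assumes "real (card W) \<le> m" "0 < Q"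
    and cond: "\<And>z B. z \<in> W \<Longrightarrow> B \<in> sets borel \<Longrightarrow>
      prob (F \<inter> {\<omega> \<in> space M. \<sigma> z \<omega> \<in> B}) * Q \<le> prob F * law B"
    and "B \<in> sets borel"
  shows "(\<Sum>z\<in>W. prob (F \<inter> {\<omega> \<in> space M. \<sigma> z \<omega> \<in> B})) \<le> prob F * m / Q * law B"
proof -
  have "(\<Sum>z\<in>W. prob (F \<inter> {\<omega> \<in> space M. \<sigma> z \<omega> \<in> B})) \<le> (\<Sum>z\<in>W. prob F * law B / Q)"
    using cond[OF _ \<open>B \<in> sets borel\<close>] \<open>0 < Q\<close> by (intro sum_mono) (simp add: pos_le_divide_eq)
  also have "\<dots> = real (card W) * (prob F * law B / Q)" by simp
  also have "\<dots> \<le> m * (prob F * law B / Q)"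
    using assms(1,2) by (intro mult_right_mono) (auto simp: law_nonneg)
  finally show ?thesis by (simp add: mult_ac)
qed

lemma prob_layer_sum_ge_le:
  fixes F :: "'a set" and W :: "int set" and a :: real
  defines "G z j \<equiv> F \<inter> {\<omega> \<in> space M. \<sigma> z \<omega> \<in> {a / 2^Suc j<..}}"
  assumes F: "F \<in> events" and card: "real (card W) \<le> m"
    and cond: "\<And>z B. z \<in> W \<Longrightarrow> B \<in> sets borel \<Longrightarrow>
      prob (F \<inter> {\<omega> \<in> space M. \<sigma> z \<omega> \<in> B}) * Q \<le> prob F * law B"
    and "0 < Q" "0 \<le> a" "0 < c"
  shows "prob {\<omega> \<in> space M. c \<le> (\<Sum>z\<in>W. \<Sum>j<N. a / 2^j * indicator (G z j) \<omega>)}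
    \<le> prob F * m / Q * (\<Sum>j<N. a / 2^j * law {a / 2^Suc j<..}) / c"
proof -
  define w where "w j = a / 2^j" for j :: nat
  have G [measurable]: "G z j \<in> events" for z j using F by (simp add: G_def)
  have intG: "integrable M (indicator (G z j) :: 'a \<Rightarrow> real)" for z j
    using G by (intro integrable_real_indicator) (auto simp: less_top[symmetric])
  have "prob {\<omega> \<in> space M. c \<le> (\<Sum>z\<in>W. \<Sum>j<N. w j * indicator (G z j) \<omega>)}
      \<le> (\<integral>\<omega>. (\<Sum>z\<in>W. \<Sum>j<N. w j * indicator (G z j) \<omega>) \<partial>M) / c"
    using \<open>0 < c\<close> \<open>0 \<le> a\<close>
    by (intro integral_Markov_inequality_measure[where A = "space M"]
        Bochner_Integration.integrable_sum integrable_mult_right intG)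
       (auto simp: w_def intro!: sum_nonneg)
  also have "(\<integral>\<omega>. (\<Sum>z\<in>W. \<Sum>j<N. w j * indicator (G z j) \<omega>) \<partial>M)
      = (\<Sum>z\<in>W. \<Sum>j<N. \<integral>\<omega>. w j * indicator (G z j) \<omega> \<partial>M)"
    by (simp only: Bochner_Integration.integral_sum Bochner_Integration.integrable_sum
        integrable_mult_right intG)
  also have "\<dots> = (\<Sum>j<N. w j * (\<Sum>z\<in>W. prob (G z j)))"
    by (simp only: integral_mult_right_zero) (simp add: sets.Int_space_eq2 sum_distrib_left sum.swap[of _ W])
  also have "\<dots> \<le> (\<Sum>j<N. w j * (prob F * m / Q * law {a / 2^Suc j<..}))"
    unfolding G_def w_def using \<open>0 \<le> a\<close>
    by (intro sum_mono mult_left_mono sum_prob_Int_\<sigma>_in_le[OF card \<open>0 < Q\<close> cond]) auto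
  also have "\<dots> = prob F * m / Q * (\<Sum>j<N. a / 2^j * law {a / 2^Suc j<..})"
    by (simp add: w_def sum_distrib_left mult_ac)
  finally show ?thesis
    using \<open>0 < c\<close> by (simp add: w_def divide_right_mono)
qed

lemma prob_Int_sum_ge_le:
  fixes F :: "'a set" and W :: "int set"
  assumes F: "F \<in> events" and "finite W" and card: "real (card W) \<le> m"
    and cond: "\<And>z B. z \<in> W \<Longrightarrow> B \<in> sets borel \<Longrightarrow>
      prob (F \<inter> {\<omega> \<in> space M. \<sigma> z \<omega> \<in> B}) * Q \<le> prob F * law B"
    and "0 < Q" "0 \<le> a" "0 < y0" "a / 2^N < y0" "m * y0 < c"
  shows "prob (F \<inter> {\<omega> \<in> space M. c \<le> (\<Sum>z\<in>W. \<sigma> z \<omega>)})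
    \<le> prob F * m / Q * (law {a<..} + (\<Sum>j<N. a / 2^j * law {a / 2^Suc j<..}) / (c - m * y0))"
proof -
  define Big where "Big = (\<Union>z\<in>W. F \<inter> {\<omega> \<in> space M. \<sigma> z \<omega> \<in> {a<..}})"
  define V where "V \<omega> = (\<Sum>z\<in>W. \<Sum>j<N. a / 2^j * indicator (F \<inter> {\<omega> \<in> space M. \<sigma> z \<omega> \<in> {a / 2^Suc j<..}}) \<omega>)"
    for \<omega>
  have [measurable]: "Big \<in> events" "V \<in> borel_measurable M"
    unfolding Big_def V_def using F \<open>finite W\<close> by measurable
  have "F \<inter> {\<omega> \<in> space M. c \<le> (\<Sum>z\<in>W. \<sigma> z \<omega>)} \<subseteq> Big \<union> {\<omega> \<in> space M. c - m * y0 \<le> V \<omega>}"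
  proof (intro subsetI)
    fix \<omega> assume \<omega>: "\<omega> \<in> F \<inter> {\<omega> \<in> space M. c \<le> (\<Sum>z\<in>W. \<sigma> z \<omega>)}"
    show "\<omega> \<in> Big \<union> {\<omega> \<in> space M. c - m * y0 \<le> V \<omega>}"
    proof (cases "\<omega> \<in> Big")
      case False
      then have "\<sigma> z \<omega> \<le> a" if "z \<in> W" for z using \<omega> that by (auto simp: Big_def)
      from sum_le_dyadic_layers[OF card assms(6-8), of "\<lambda>z. \<sigma> z \<omega>", OF this]
      show ?thesis using \<omega> by (simp add: V_def indicator_def)
    qed simp
  qed
  then have "prob (F \<inter> {\<omega> \<in> space M. c \<le> (\<Sum>z\<in>W. \<sigma> z \<omega>)})
      \<le> prob Big + prob {\<omega> \<in> space M. c - m * y0 \<le> V \<omega>}"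
    by (intro order.trans[OF finite_measure_mono measure_Un_le]) auto
  also have "prob Big \<le> prob F * m / Q * law {a<..}"
    unfolding Big_def using \<open>finite W\<close> F
    by (intro order.trans[OF measure_UNION_le sum_prob_Int_\<sigma>_in_le[OF card \<open>0 < Q\<close> cond]]) auto
  also have "prob {\<omega> \<in> space M. c - m * y0 \<le> V \<omega>}
      \<le> prob F * m / Q * (\<Sum>j<N. a / 2^j * law {a / 2^Suc j<..}) / (c - m * y0)"
    unfolding V_def using assms \<open>m * y0 < c\<close> by (intro prob_layer_sum_ge_le) auto
  finally show ?thesis
    by (simp add: add_divide_distrib distrib_left)
qed

definition first_exceedance :: "(nat \<Rightarrow> int) \<Rightarrow> real \<Rightarrow> nat \<Rightarrow> 'a set" where
  "first_exceedance p e k = {\<omega> \<in> space M. e < \<sigma> (p k) \<omega> \<and> (\<forall>j\<in>p ` {..<k}. \<sigma> j \<omega> \<le> e)}"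

lemma first_exceedance_in_events [measurable]: "first_exceedance p e k \<in> events"
  unfolding first_exceedance_def by measurable

lemma disjoint_family_first_exceedance: "disjoint_family (first_exceedance p e)"
  unfolding disjoint_family_on_def
proof (intro ballI impI)
  fix k k' :: nat assume "k \<noteq> k'"
  then show "first_exceedance p e k \<inter> first_exceedance p e k' = {}"
    by (cases k k' rule: linorder_cases) (force simp: first_exceedance_def)+
qed

lemma sum_prob_first_exceedance_le_1: "(\<Sum>k<K. prob (first_exceedance p e k)) \<le> 1"
proof -
  have "(\<Sum>k<K. prob (first_exceedance p e k)) = prob (\<Union>k<K. first_exceedance p e k)"
    using disjoint_family_on_mono[OF subset_UNIV disjoint_family_first_exceedance]
    by (intro measure_finite_Union[symmetric]) auto
  then show ?thesis by simp
qed

lemma first_exceedance_cases: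
  assumes "\<omega> \<in> space M"
  shows "(\<forall>i<K. \<sigma> (p i) \<omega> \<le> e) \<or> (\<exists>k<K. \<omega> \<in> first_exceedance p e k)"
proof (cases "\<exists>i<K. e < \<sigma> (p i) \<omega>")
  case True
  then obtain i where "i < K" "e < \<sigma> (p i) \<omega>" by blast
  then obtain k where "k \<le> i" "\<forall>j<k. \<not> e < \<sigma> (p j) \<omega>" "e < \<sigma> (p k) \<omega>"
    using ex_least_nat_le[of "\<lambda>i. e < \<sigma> (p i) \<omega>"] by blast
  then have "k < K" "\<omega> \<in> first_exceedance p e k"
    using \<open>i < K\<close> assms by (auto simp: first_exceedance_def)
  then show ?thesis by blast
qed auto

lemma prob_none_exceeds:
  assumes "inj p"
  shows "prob {\<omega> \<in> space M. \<forall>i<K. \<sigma> (p i) \<omega> \<le> e} = law {..e}^K"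
proof -
  have "prob {\<omega> \<in> space M. \<forall>i<K. \<sigma> (p i) \<omega> \<le> e} = prob {\<omega> \<in> space M. \<forall>j\<in>p ` {..<K}. \<sigma> j \<omega> \<in> {..e}}"
    by (rule arg_cong[where f = prob]) auto
  also have "\<dots> = (\<Prod>j\<in>p ` {..<K}. law {..e})"
    by (rule prob_all_\<sigma>_in) auto
  also have "\<dots> = law {..e}^K"
    using assms by (simp add: card_image inj_on_subset[of p UNIV])
  finally show ?thesis .
qed

lemma prob_first_exceedance_Int_le:
  assumes "inj p" "z \<noteq> p k" "B \<in> sets borel"
  shows "prob (first_exceedance p e k \<inter> {\<omega> \<in> space M. \<sigma> z \<omega> \<in> B}) * law {..e}
    \<le> prob (first_exceedance p e k) * law B"
  unfolding first_exceedance_def using assms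
  by (intro prob_exceedance_Int_le) (auto dest: injD)

lemma prob_first_exceedance_window_ge_le:
  fixes p :: "nat \<Rightarrow> int" and Zf :: "'a \<Rightarrow> int" and Wd :: "int \<Rightarrow> int set"
  assumes "inj p"
    and first: "\<And>k \<omega>. \<omega> \<in> space M \<Longrightarrow> e < \<sigma> (p k) \<omega> \<Longrightarrow> (\<forall>i<k. \<sigma> (p i) \<omega> \<le> e) \<Longrightarrow> Zf \<omega> = p k"
    and "0 < law {..e}" "law {..e} < 1"
    and Wd: "\<And>k. finite (Wd k)" "\<And>k. k \<notin> Wd k" "\<And>k. real (card (Wd k)) \<le> m"
    and "0 \<le> a" "0 < y0" "a / 2^N < y0" "m * y0 < c"
  shows "prob {\<omega> \<in> space M. c \<le> (\<Sum>z\<in>Wd (Zf \<omega>). \<sigma> z \<omega>)}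
    \<le> m / law {..e} * (law {a<..} + (\<Sum>j<N. a / 2^j * law {a / 2^Suc j<..}) / (c - m * y0))"
    (is "prob ?A \<le> ?X")
proof -
  define A where "A k = first_exceedance p e k \<inter> {\<omega> \<in> space M. c \<le> (\<Sum>z\<in>Wd (p k). \<sigma> z \<omega>)}" for k
  have A [measurable]: "A k \<in> events" for k
    unfolding A_def using Wd(1) by measurable
  have "0 \<le> m" using Wd(3)[of 0] by linarith
  have "0 \<le> ?X"
    using \<open>0 \<le> m\<close> \<open>0 \<le> a\<close> \<open>m * y0 < c\<close>
    by (intro mult_nonneg_nonneg divide_nonneg_nonneg add_nonneg_nonneg sum_nonneg) (auto simp: law_nonneg)
  have A_le: "prob (A k) \<le> prob (first_exceedance p e k) * ?X" for k
  proof -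
    have "prob (A k) \<le> prob (first_exceedance p e k) * m / law {..e} *
        (law {a<..} + (\<Sum>j<N. a / 2^j * law {a / 2^Suc j<..}) / (c - m * y0))"
      unfolding A_def
    proof (rule prob_Int_sum_ge_le[OF first_exceedance_in_events Wd(1,3) _ assms(3,8-11)])
      show "z \<in> Wd (p k) \<Longrightarrow> B \<in> sets borel \<Longrightarrow> prob (first_exceedance p e k \<inter> {\<omega> \<in> space M. \<sigma> z \<omega> \<in> B}) *
          law {..e} \<le> prob (first_exceedance p e k) * law B" for z B
        using Wd(2)[of "p k"] by (intro prob_first_exceedance_Int_le[OF \<open>inj p\<close>]) auto
    qed
    then show ?thesis by (simp add: mult_ac)
  qed
  have "prob ?A \<le> law {..e}^K + ?X" for K
  proof -
    have "?A \<subseteq> {\<omega> \<in> space M. \<forall>i<K. \<sigma> (p i) \<omega> \<le> e} \<union> (\<Union>k<K. A k)"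
    proof (intro subsetI)
      fix \<omega> assume \<omega>: "\<omega> \<in> ?A"
      then consider "\<forall>i<K. \<sigma> (p i) \<omega> \<le> e" | k where "k < K" "\<omega> \<in> first_exceedance p e k"
        using first_exceedance_cases[of \<omega> K p e] by blast
      then show "\<omega> \<in> {\<omega> \<in> space M. \<forall>i<K. \<sigma> (p i) \<omega> \<le> e} \<union> (\<Union>k<K. A k)"
      proof cases
        case (2 k)
        then have "Zf \<omega> = p k" using first[of \<omega> k] by (auto simp: first_exceedance_def)
        then show ?thesis using 2 \<omega> by (auto simp: A_def)
      qed (use \<omega> in auto)
    qed
    then have "prob ?A \<le> prob {\<omega> \<in> space M. \<forall>i<K. \<sigma> (p i) \<omega> \<le> e} + prob (\<Union>k<K. A k)"
      by (intro order.trans[OF finite_measure_mono measure_Un_le]) auto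
    moreover have "prob (\<Union>k<K. A k) \<le> ?X"
    proof -
      have "prob (\<Union>k<K. A k) \<le> (\<Sum>k<K. prob (A k))"
        by (rule measure_UNION_le) auto
      also have "\<dots> \<le> (\<Sum>k<K. prob (first_exceedance p e k)) * ?X"
        unfolding sum_distrib_right by (rule sum_mono) (rule A_le)
      also have "\<dots> \<le> ?X"
        using \<open>0 \<le> ?X\<close> sum_prob_first_exceedance_le_1
        by (intro mult_left_le_one_le) (auto intro: sum_nonneg)
      finally show ?thesis .
    qed
    ultimately show ?thesis using prob_none_exceeds[OF \<open>inj p\<close>, of K e] by linarith
  qed
  then show ?thesis
    by (rule le_of_le_power_add) (use \<open>0 < law {..e}\<close> \<open>law {..e} < 1\<close> in auto)
qed

lemma law_greaterThan: "law {x<..} = 1 / tailL M \<sigma> x"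
  by (simp add: law_def tailL_def)

lemma law_atMost: "law {..x} = 1 - 1 / tailL M \<sigma> x"
proof -
  have "{\<omega> \<in> space M. \<sigma> 0 \<omega> \<in> {..x}} = space M - {\<omega> \<in> space M. \<sigma> 0 \<omega> \<in> {x<..}}" by auto
  then show ?thesis by (simp add: law_def prob_compl flip: law_greaterThan)
qed

lemma tailL_nonneg: "0 \<le> tailL M \<sigma> x"
  by (simp add: tailL_def)

lemma tailL_mono:
  assumes "x \<le> y" "0 < tailL M \<sigma> y"
  shows "tailL M \<sigma> x \<le> tailL M \<sigma> y"
proof -
  have "law {y<..} \<le> law {x<..}" using assms(1) by (intro law_mono) auto
  then have le: "1 / tailL M \<sigma> y \<le> 1 / tailL M \<sigma> x" by (simp add: law_greaterThan)
  moreover have "0 < 1 / tailL M \<sigma> y" using assms(2) by simp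
  ultimately have "0 < tailL M \<sigma> x" using zero_less_divide_1_iff by fastforce
  with le assms(2) show ?thesis by (simp add: field_simps)
qed

lemma law_dyadic_layers_le:
  assumes halving: "\<And>y. y0 \<le> y \<Longrightarrow> 0 < tailL M \<sigma> y \<and> 3/4 * tailL M \<sigma> y \<le> tailL M \<sigma> (y/2)"
    and "0 < a" "\<And>j. j < N \<Longrightarrow> y0 \<le> a / 2^j"
  shows "(\<Sum>j<N. a / 2^j * law {a / 2^Suc j<..}) \<le> 4 * a / tailL M \<sigma> a"
  using dyadic_layers_tail_sum_le[of y0 "tailL M \<sigma>" a N, OF halving assms(2) tailL_nonneg assms(3)]
  by (simp add: law_greaterThan)

lemma prob_first_exceedance_window_large:
  fixes p :: "nat \<Rightarrow> int" and Zf :: "'a \<Rightarrow> int"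
  defines "L \<equiv> tailL M \<sigma>"
  assumes halving: "\<And>y. y0 \<le> y \<Longrightarrow> 0 < L y \<and> 3/4 * L y \<le> L (y/2)" and "0 < y0"
    and square: "\<And>x. y0 < x \<Longrightarrow> (L x)^2 \<le> C * x" and "0 < C"
    and hh: "2 \<le> hh" "L y0 < hh" "8 * y0 * C \<le> hh"
    and r: "hh^2 \<le> L e" and slow: "L e * (1 - 1/hh) < L (e / hh^3)"
    and "inj p"
    and first: "\<And>k \<omega>. \<omega> \<in> space M \<Longrightarrow> e < \<sigma> (p k) \<omega> \<Longrightarrow> (\<forall>i<k. \<sigma> (p i) \<omega> \<le> e) \<Longrightarrow> Zf \<omega> = p k"
  shows "prob {\<omega> \<in> space M. e / (2 * hh) \<le> (\<Sum>z\<in>window (L e / hh) (Zf \<omega>). \<sigma> z \<omega>)} \<le> 136 / hh"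
proof -
  define r where "r = L e"
  define a where "a = e / hh^3"
  have "hh \<le> r" "y0 < e" and small: "2 * (r / hh) * y0 \<le> e / (4 * hh)"
    using scale_bounds_of_square_le_linear[of L, OF _ \<open>0 < y0\<close> _ square \<open>0 < C\<close> hh r] halving[of y0] tailL_mono
    unfolding r_def L_def by auto
  then have "0 < e" "0 < a" "0 < r" using \<open>0 < y0\<close> hh(1) by (auto simp: a_def)
  have "law {..e} = 1 - 1 / r" by (simp add: law_atMost r_def L_def)
  moreover have "1 / r \<le> 1 / 2" using \<open>hh \<le> r\<close> hh(1) by (simp add: field_simps)
  ultimately have Q: "0 < law {..e}" "law {..e} < 1" "1/2 \<le> law {..e}"
    using \<open>0 < r\<close> by auto
  have "r * (1/2) \<le> r * (1 - 1/hh)"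
    using \<open>0 < r\<close> hh(1) by (intro mult_left_mono) (auto simp: field_simps)
  then have "r / 2 \<le> L a" using slow unfolding a_def r_def by linarith
  then have "1 / L a \<le> 1 / (r / 2)" using \<open>0 < r\<close> by (intro divide_left_mono) auto
  then have law_a: "law {a<..} \<le> 2 / r" by (simp add: law_greaterThan L_def)
  obtain N where N: "a / 2^N < y0" "\<And>j. j < N \<Longrightarrow> y0 \<le> a / 2^j"
    using exists_least_dyadic_below[OF \<open>0 < y0\<close>] by blast
  have "(\<Sum>j<N. a / 2^j * law {a / 2^Suc j<..}) \<le> 4 * a / L a"
    using law_dyadic_layers_le[OF halving[unfolded L_def] \<open>0 < a\<close> N(2)] by (simp add: L_def)
  also have "\<dots> \<le> 4 * a / (r / 2)"
    using \<open>r / 2 \<le> L a\<close> \<open>0 < a\<close> \<open>0 < r\<close> by (intro divide_left_mono) auto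
  finally have layers: "(\<Sum>j<N. a / 2^j * law {a / 2^Suc j<..}) \<le> 8 * (e / hh^3) / r"
    by (simp add: a_def)
  have card: "real (card (window (r / hh) k)) \<le> 2 * (r / hh)" for k
    using \<open>0 < r\<close> hh(1) by (intro card_window_le) simp
  have gap: "e / (4 * hh) \<le> e / (2 * hh) - 2 * (r / hh) * y0"
    using small by (simp add: field_simps)
  moreover have "0 < e / (4 * hh)" using \<open>0 < e\<close> hh(1) by simp
  ultimately have "2 * (r / hh) * y0 < e / (2 * hh)" by linarith
  from prob_first_exceedance_window_ge_le[OF \<open>inj p\<close> first Q(1,2) finite_window center_notin_window card
      less_imp_le[OF \<open>0 < a\<close>] \<open>0 < y0\<close> N(1) this]
  have "prob {\<omega> \<in> space M. e / (2 * hh) \<le> (\<Sum>z\<in>window (r / hh) (Zf \<omega>). \<sigma> z \<omega>)}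
      \<le> 2 * (r / hh) / law {..e} *
        (law {a<..} + (\<Sum>j<N. a / 2^j * law {a / 2^Suc j<..}) / (e / (2 * hh) - 2 * (r / hh) * y0))" .
  also have "\<dots> \<le> 136 / hh"
    using \<open>0 < a\<close> by (intro window_bound_arith[OF hh(1) \<open>0 < r\<close> \<open>0 < e\<close> Q(3) law_nonneg law_a _ layers gap]
        sum_nonneg) (simp add: law_nonneg)
  finally show ?thesis unfolding r_def .
qed

lemma measurable_window_sum:
  assumes "Zf \<in> measurable M (count_space UNIV)"
  shows "(\<lambda>\<omega>. \<Sum>z\<in>window n (Zf \<omega>). \<sigma> z \<omega>) \<in> borel_measurable M"
  using measurable_compose_countable[where f = "\<lambda>k \<omega>. \<Sum>z\<in>window n k. \<sigma> z \<omega>" and g = Zf, OF _ assms]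
  by simp

lemma measurable_Z1: "Z1 M \<sigma> t \<in> measurable M (count_space UNIV)"
  unfolding Z1_def by (rule measurable_Inf_int[where b = 1]) auto

lemma measurable_Z2: "Z2 M \<sigma> t \<in> measurable M (count_space UNIV)"
  unfolding Z2_def by (rule measurable_Sup_int[where b = 0]) auto

lemma Z1_eq_first_exceedance:
  "ellt M \<sigma> t < \<sigma> (int k + 1) \<omega> \<Longrightarrow> \<forall>i<k. \<sigma> (int i + 1) \<omega> \<le> ellt M \<sigma> t \<Longrightarrow> Z1 M \<sigma> t \<omega> = int k + 1"
  unfolding Z1_def by (rule Inf_pos_int_eq_first) auto

lemma Z2_eq_first_exceedance:
  "ellt M \<sigma> t < \<sigma> (- int k) \<omega> \<Longrightarrow> \<forall>i<k. \<sigma> (- int i) \<omega> \<le> ellt M \<sigma> t \<Longrightarrow> Z2 M \<sigma> t \<omega> = - int k"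
  unfolding Z2_def by (rule Sup_nonpos_int_eq_first) auto

lemma prob_Sbar_lt_ge:
  assumes halving: "\<And>y. y0 \<le> y \<Longrightarrow> 0 < tailL M \<sigma> y \<and> 3/4 * tailL M \<sigma> y \<le> tailL M \<sigma> (y/2)" and "0 < y0"
    and square: "\<And>x. y0 < x \<Longrightarrow> (tailL M \<sigma> x)^2 \<le> C * x" and "0 < C"
    and hh: "2 \<le> h t" "tailL M \<sigma> y0 < h t" "8 * y0 * C \<le> h t"
    and r: "(h t)^2 \<le> rt M \<sigma> t"
    and slow: "rt M \<sigma> t * (1 - 1 / h t) < tailL M \<sigma> (ellt M \<sigma> t / (h t)^3)"
  shows "1 - 272 / h t \<le> prob {\<omega> \<in> space M. Sbar M \<sigma> h t \<omega> < ellt M \<sigma> t / h t}"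
proof -
  define e where "e = ellt M \<sigma> t"
  define n where "n = rt M \<sigma> t / h t"
  define S1 where "S1 \<omega> = (\<Sum>z\<in>window n (Z1 M \<sigma> t \<omega>). \<sigma> z \<omega>)" for \<omega>
  define S2 where "S2 \<omega> = (\<Sum>z\<in>window n (Z2 M \<sigma> t \<omega>). \<sigma> z \<omega>)" for \<omega>
  have rt: "rt M \<sigma> t = tailL M \<sigma> e" by (simp add: rt_def e_def)
  have Sbar: "Sbar M \<sigma> h t \<omega> = S1 \<omega> + S2 \<omega>" for \<omega>
    by (simp add: Sbar_def S1_def S2_def window_def n_def)
  have [measurable]: "S1 \<in> borel_measurable M" "S2 \<in> borel_measurable M"
    unfolding S1_def S2_def by (intro measurable_window_sum measurable_Z1 measurable_Z2)+
  have "prob {\<omega> \<in> space M. e / (2 * h t) \<le> S1 \<omega>} \<le> 136 / h t"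
    unfolding S1_def n_def rt
    by (rule prob_first_exceedance_window_large[where p = "\<lambda>i. int i + 1", OF halving \<open>0 < y0\<close> square
          \<open>0 < C\<close> hh _ _ _ Z1_eq_first_exceedance[folded e_def]])
       (use r slow in \<open>auto simp: rt e_def inj_def\<close>)
  moreover have "prob {\<omega> \<in> space M. e / (2 * h t) \<le> S2 \<omega>} \<le> 136 / h t"
    unfolding S2_def n_def rt
    by (rule prob_first_exceedance_window_large[where p = "\<lambda>i. - int i", OF halving \<open>0 < y0\<close> square
          \<open>0 < C\<close> hh _ _ _ Z2_eq_first_exceedance[folded e_def]])
       (use r slow in \<open>auto simp: rt e_def inj_def\<close>)
  moreover have "space M - {\<omega> \<in> space M. Sbar M \<sigma> h t \<omega> < e / h t}
      \<subseteq> {\<omega> \<in> space M. e / (2 * h t) \<le> S1 \<omega>} \<union> {\<omega> \<in> space M. e / (2 * h t) \<le> S2 \<omega>}"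
    by (auto simp: Sbar field_simps)
  then have "prob (space M - {\<omega> \<in> space M. Sbar M \<sigma> h t \<omega> < e / h t})
      \<le> prob {\<omega> \<in> space M. e / (2 * h t) \<le> S1 \<omega>} + prob {\<omega> \<in> space M. e / (2 * h t) \<le> S2 \<omega>}"
    by (intro order.trans[OF finite_measure_mono measure_Un_le]) auto
  moreover have "{\<omega> \<in> space M. Sbar M \<sigma> h t \<omega> < e / h t} \<in> events"
    unfolding Sbar by measurable
  ultimately show ?thesis
    unfolding e_def by (simp add: prob_compl)
qed

lemma eventually_prob_Sbar_lt_ge:
  assumes slow: "((\<lambda>u. tailL M \<sigma> (u * (1/2)) / tailL M \<sigma> u) \<longlongrightarrow> 1) at_top"
    and "filterlim h at_top at_top" and "(\<lambda>t. (h t)\<^sup>2) \<in> o(\<lambda>t. rt M \<sigma> t)"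
    and "eventually (\<lambda>t. tailL M \<sigma> (ellt M \<sigma> t) * (1 - 1 / h t) < tailL M \<sigma> (ellt M \<sigma> t / (h t)^3)) at_top"
  shows "eventually (\<lambda>t. 1 - 272 / h t \<le> prob {\<omega> \<in> space M. Sbar M \<sigma> h t \<omega> < ellt M \<sigma> t / h t}) at_top"
proof -
  obtain y0 where "0 < y0" and halving: "\<And>y. y0 \<le> y \<Longrightarrow> 0 < tailL M \<sigma> y \<and> 3/4 * tailL M \<sigma> y \<le> tailL M \<sigma> (y/2)"
    using slowly_varying_halving_bound[OF slow tailL_nonneg] by blast
  define C where "C = (tailL M \<sigma> (2 * y0))^2 / y0"
  have "0 < C" using halving[of "2 * y0"] \<open>0 < y0\<close> by (simp add: C_def)
  have square: "(tailL M \<sigma> x)^2 \<le> C * x" if "y0 < x" for x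
    using square_le_linear_of_halving[of y0 "tailL M \<sigma>", OF halving \<open>0 < y0\<close> tailL_nonneg tailL_mono that]
    by (simp add: C_def)
  have "eventually (\<lambda>t. max 2 (max (tailL M \<sigma> y0 + 1) (8 * y0 * C)) \<le> h t) at_top"
    using assms(2) unfolding filterlim_at_top by blast
  moreover have "eventually (\<lambda>t. (h t)^2 \<le> rt M \<sigma> t) at_top"
    using landau_o.smallD[OF assms(3), of 1] by (auto simp: rt_def tailL_nonneg elim!: eventually_mono)
  ultimately show ?thesis
    using assms(4)
  proof eventually_elim
    case (elim t)
    show ?case
    proof (rule prob_Sbar_lt_ge[OF halving \<open>0 < y0\<close> square \<open>0 < C\<close>])
      show "2 \<le> h t" "tailL M \<sigma> y0 < h t" "8 * y0 * C \<le> h t" using elim(1) by auto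
      show "(h t)^2 \<le> rt M \<sigma> t" using elim(2) .
      show "rt M \<sigma> t * (1 - 1 / h t) < tailL M \<sigma> (ellt M \<sigma> t / (h t)^3)"
        using elim(3) by (simp add: rt_def)
    qed
  qed
qed

end

theorem proposition3p11:
  fixes M :: "'a measure" and \<sigma> :: "int \<Rightarrow> 'a \<Rightarrow> real" and h :: "real \<Rightarrow> real"
  assumes "prob_space M"
    and "\<And>z. \<sigma> z \<in> borel_measurable M"
    and "prob_space.indep_vars M (\<lambda>_. borel) \<sigma> UNIV"
    and "\<And>z. distr M borel (\<sigma> z) = distr M borel (\<sigma> 0)"
    and "\<And>z. AE \<omega> in M. \<sigma> z \<omega> > 0"
    and "\<And>v. v > 0 \<Longrightarrow> ((\<lambda>u. tailL M \<sigma> (u * v) / tailL M \<sigma> u) \<longlongrightarrow> 1) at_top"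
    and "filterlim h at_top at_top"
    and "(\<lambda>t. (h t)\<^sup>2) \<in> o(\<lambda>t. rt M \<sigma> t)"
    and "eventually (\<lambda>t. tailL M \<sigma> (ellt M \<sigma> t / (h t)^3) > tailL M \<sigma> (ellt M \<sigma> t) * (1 - 1 / h t)
                       \<and> tailL M \<sigma> (ellt M \<sigma> t * (h t)^3) < tailL M \<sigma> (ellt M \<sigma> t) * (1 + 1 / h t)) at_top"
  shows "((\<lambda>t. measure M {\<omega> \<in> space M. Sbar M \<sigma> h t \<omega> < ellt M \<sigma> t / h t}) \<longlongrightarrow> 1) at_top"
proof -
  interpret iid_family M \<sigma>
    using assms(1-4) by (intro iid_family.intro iid_family_axioms.intro) auto
  have lower: "eventually (\<lambda>t. 1 - 272 / h t \<le> prob {\<omega> \<in> space M. Sbar M \<sigma> h t \<omega> < ellt M \<sigma> t / h t}) at_top"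
    using assms(6)[of "1/2"] assms(7,8) eventually_mono[OF assms(9)]
    by (intro eventually_prob_Sbar_lt_ge) auto
  have "((\<lambda>t. 1 - 272 * inverse (h t)) \<longlongrightarrow> 1 - 272 * 0) at_top"
    by (intro tendsto_intros tendsto_inverse_0_at_top assms(7))
  then have lim: "((\<lambda>t. 1 - 272 / h t) \<longlongrightarrow> 1) at_top"
    by (simp add: divide_inverse)
  have upper: "eventually (\<lambda>t. prob {\<omega> \<in> space M. Sbar M \<sigma> h t \<omega> < ellt M \<sigma> t / h t} \<le> 1) at_top"
    by simp
  show ?thesis
    by (rule tendsto_sandwich[OF lower upper lim tendsto_const])
qed

end
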